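(* Let $(R,\Lambda,S)$ be a generalised Renner–Coxeter system. (i) For every chain $e_1\le e_2\le\cdots\le e_m$ in $E(R)$ there exist $w\in G(R)$ and a chain $f_1\le f_2\le\cdots\le f_m$ in $\Lambda$ such that $wf_iw^{-1}=e_i$ for every $i$. (ii) If $\Lambda$ has a least element $e$, then $\lambda(e)=S$. (iii) For all $e,f\in\Lambda$ and $w\in\mathrm{Red}(e,f)$, $ewf=\max\{h\in\Lambda\mid h\le e,\ h\le f,\ w\in W(h)\}=fw^{-1}e$.
   Context: For a monoid $R$, $E(R)$ is its set of idempotents, $G(R)$ its unit group. $R$ is factorisable if $R=E(R)G(R)=G(R)E(R)$ and idempotents commute; then $E(R)$ is a semilattice ($e\le f\iff ef=fe=e$) on which $G(R)$ acts by conjugation. For $e\in E(R)$, $W(e)=\{w\in G(R)\mid we=ew\}$, $W_\star(e)=\{w\mid we=ew=e\}$. For a Coxeter system $(W,S)$, $W_I$ is the subgroup generated by $I\subseteq S$. A generalised Renner–Coxeter system is a triple $(R,\Lambda,S)$ with: (ECS1) $R$ factorisable; (ECS2) $\Lambda\subseteq E(R)$ contains exactly one element of each $G(R)$-orbit and is closed under multiplication; (ECS3) $(G(R),S)$ is a Coxeter system; (ECS4) for $e_1\le e_2$ in $E(R)$ there are $w\in G(R)$, $f_1\le f_2$ in $\Lambda$ with $wf_iw^{-1}=e_i$; (ECS5) for $e\in\Lambda$, $W(e)$, $W_\star(e)$ are of the form $W_I$; (ECS6) with $\lambda^\star(e)=\{s\in S\mid se=es\ne e\}$, $e\le f$ in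 $\Lambda$ implies $\lambda^\star(e)\subseteq\lambda^\star(f)$. For $e\in\Lambda$, $\lambda(e)\subseteq S$ is defined by $W(e)=W_{\lambda(e)}$. $\mathrm{Red}(e,f)$ is the set of $w\in G(R)$ of minimal Coxeter length in $W_{\lambda(e)}wW_{\lambda(f)}$. *)

theory Defs
  imports Main
begin

text \<open>The monoid R is modelled as the whole of a type of class monoid_mult (R = UNIV).\<close>

definition idems :: "'a::monoid_mult set" where
  "idems = {e. e * e = e}"

definition unitgrp :: "'a::monoid_mult set" where
  "unitgrp = {u. \<exists>v. u * v = 1 \<and> v * u = 1}"

definition uinv :: "'a::monoid_mult \<Rightarrow> 'a" where
  "uinv u = (THE v. u * v = 1 \<and> v * u = 1)"

definition ileq :: "'a::monoid_mult \<Rightarrow> 'a \<Rightarrow> bool" where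
  "ileq e f \<longleftrightarrow> e * f = e \<and> f * e = e"

definition factorisable :: "'a::monoid_mult set \<Rightarrow> bool" where
  "factorisable R \<longleftrightarrow>
     R = {e * g | e g. e \<in> idems \<and> g \<in> unitgrp} \<and>
     R = {g * e | e g. e \<in> idems \<and> g \<in> unitgrp} \<and>
     (\<forall>e\<in>idems. \<forall>f\<in>idems. e * f = f * (e::'a))"

text \<open>Coxeter systems via the Coxeter presentation: the congruence on words over S
  generated by the relations s s = 1 and (s t)^m(s,t) = 1, m(s,t) the order of st.\<close>

definition cox_m :: "'a::monoid_mult \<Rightarrow> 'a \<Rightarrow> nat" where
  "cox_m s t = (LEAST m. 0 < m \<and> (s * t) ^ m = 1)"

inductive cox_cong :: "'a::monoid_mult set \<Rightarrow> 'a list \<Rightarrow> 'a list \<Rightarrow> bool" for S where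
  cc_refl: "cox_cong S u u"
| cc_sym: "cox_cong S u v \<Longrightarrow> cox_cong S v u"
| cc_trans: "cox_cong S u v \<Longrightarrow> cox_cong S v w \<Longrightarrow> cox_cong S u w"
| cc_ctxt: "cox_cong S u v \<Longrightarrow> cox_cong S (x @ u @ y) (x @ v @ y)"
| cc_sq: "s \<in> S \<Longrightarrow> cox_cong S [s, s] []"
| cc_braid: "s \<in> S \<Longrightarrow> t \<in> S \<Longrightarrow> (\<exists>m>0. (s * t) ^ m = 1) \<Longrightarrow>
     cox_cong S (concat (replicate (cox_m s t) [s, t])) []"

definition coxeter_system :: "'a::monoid_mult set \<Rightarrow> 'a set \<Rightarrow> bool" where
  "coxeter_system W S \<longleftrightarrow>
     S \<subseteq> W \<and> 1 \<notin> S \<and> (\<forall>s\<in>S. s * s = 1) \<and>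
     W = {prod_list ws | ws. ws \<in> lists S} \<and>
     (\<forall>u\<in>lists S. \<forall>v\<in>lists S. prod_list u = prod_list v \<longrightarrow> cox_cong S u v)"

definition parab :: "'a::monoid_mult set \<Rightarrow> 'a set" where
  "parab I = {prod_list ws | ws. ws \<in> lists I}"

definition cox_len :: "'a::monoid_mult set \<Rightarrow> 'a \<Rightarrow> nat" where
  "cox_len S w = (LEAST n. \<exists>ws\<in>lists S. length ws = n \<and> prod_list ws = w)"

definition Wc :: "'a::monoid_mult \<Rightarrow> 'a set" where
  "Wc e = {w \<in> unitgrp. w * e = e * w}"

definition Wstar :: "'a::monoid_mult \<Rightarrow> 'a set" where
  "Wstar e = {w \<in> unitgrp. w * e = e \<and> e * w = e}"

definition lam :: "'a::monoid_mult set \<Rightarrow> 'a \<Rightarrow> 'a set" where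
  "lam S e = (THE I. I \<subseteq> S \<and> Wc e = parab I)"

definition lamstar :: "'a::monoid_mult set \<Rightarrow> 'a \<Rightarrow> 'a set" where
  "lamstar S e = {s \<in> S. s * e = e * s \<and> s * e \<noteq> e}"

definition gen_RC_system :: "'a::monoid_mult set \<Rightarrow> 'a set \<Rightarrow> bool" where
  "gen_RC_system \<Lambda> S \<longleftrightarrow>
     factorisable (UNIV :: 'a set) \<and>
     (\<Lambda> \<subseteq> idems \<and> (\<forall>e\<in>idems. \<exists>!f. f \<in> \<Lambda> \<and> (\<exists>w\<in>unitgrp. w * f * uinv w = e))
        \<and> (\<forall>e\<in>\<Lambda>. \<forall>f\<in>\<Lambda>. e * f \<in> \<Lambda>)) \<and>
     coxeter_system unitgrp S \<and>
     (\<forall>e1\<in>idems. \<forall>e2\<in>idems. ileq e1 e2 \<longrightarrow>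
        (\<exists>w\<in>unitgrp. \<exists>f1\<in>\<Lambda>. \<exists>f2\<in>\<Lambda>. ileq f1 f2 \<and>
           w * f1 * uinv w = e1 \<and> w * f2 * uinv w = e2)) \<and>
     (\<forall>e\<in>\<Lambda>. (\<exists>I. I \<subseteq> S \<and> Wc e = parab I) \<and> (\<exists>I. I \<subseteq> S \<and> Wstar e = parab I)) \<and>
     (\<forall>e\<in>\<Lambda>. \<forall>f\<in>\<Lambda>. ileq e f \<longrightarrow> lamstar S e \<subseteq> lamstar S f)"

definition Red :: "'a::monoid_mult set \<Rightarrow> 'a \<Rightarrow> 'a \<Rightarrow> 'a set" where
  "Red S e f = {w \<in> unitgrp. \<forall>a\<in>parab (lam S e). \<forall>b\<in>parab (lam S f).
                 cox_len S w \<le> cox_len S (a * w * b)}"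

definition is_max_ileq :: "'a::monoid_mult set \<Rightarrow> 'a \<Rightarrow> bool" where
  "is_max_ileq H x \<longleftrightarrow> x \<in> H \<and> (\<forall>h\<in>H. ileq h x)"

end

theory Submission
  imports Defs "HOL-Library.Multiset"
begin

text \<open>Everything is reduced, via axiom (ECS4), to comparing an idempotent with the element of
  \<open>\<Lambda>\<close> in its orbit. Two facts drive this: conjugate idempotents are never strictly comparable,
  and for \<open>f \<in> \<Lambda>\<close> the centraliser factors as \<open>W(f) = W\<^sub>\<star>(f) W\<^sub>\<lambda>\<^sub>\<star>\<^sub>(\<^sub>f\<^sub>)\<close>, so that
  by (ECS6) a conjugator can be pushed into \<open>W\<^sub>\<star>\<close>, where it fixes everything below.
  This lifts chains one step at a time (i), and shows that a least \<open>e\<close> commutes with every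
  generator (ii). For (iii), \<open>e (w f w\<^sup>-\<^sup>1)\<close> is conjugate to some \<open>f\<^sub>1 \<le> e, f\<close> in \<open>\<Lambda>\<close> by an
  element of \<open>W(e) W\<^sub>\<star>(f\<^sub>1) W(f)\<close>; minimality of \<open>w\<close> in its double coset then forces
  \<open>w \<in> W\<^sub>\<star>(f\<^sub>1)\<close>, whence \<open>e w f = f\<^sub>1\<close>.

  The Coxeter group input is derived from the presentation alone: the parity of the multiplicity
  of each reflection of a word is invariant under the Coxeter relations, so a word with distinct
  reflections is reduced, while a repeated reflection allows a deletion. Hence \<open>S \<inter> W\<^sub>I = I\<close>,
  and a minimal element of \<open>W\<^sub>I w W\<^sub>J\<close> lying in \<open>W\<^sub>I W\<^sub>L W\<^sub>J\<close> lies in \<open>W\<^sub>L\<close>.\<close>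

section \<open>Reflections and reduced words\<close>

text \<open>The reflections \<open>t\<^sub>i = s\<^sub>1 \<cdots> s\<^sub>i\<^sub>-\<^sub>1 s\<^sub>i s\<^sub>i\<^sub>-\<^sub>1 \<cdots> s\<^sub>1\<close> of a word \<open>s\<^sub>1 \<cdots> s\<^sub>n\<close>.\<close>

fun reflections :: "'a::monoid_mult list \<Rightarrow> 'a list" where
  "reflections [] = []"
| "reflections (s # ws) = s # map (\<lambda>t. s * t * s) (reflections ws)"

lemma length_reflections [simp]: "length (reflections ws) = length ws"
  by (induction ws) auto

lemma reflections_append:
  "reflections (us @ vs) =
     reflections us @ map (\<lambda>t. prod_list us * t * prod_list (rev us)) (reflections vs)"
  by (induction us) (simp_all add: comp_def mult.assoc)

lemma prod_list_rev_inverse: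
  assumes "\<forall>s\<in>set ws. s * s = (1::'a::monoid_mult)"
  shows "prod_list ws * prod_list (rev ws) = 1"
  using assms
proof (induction ws)
  case (Cons s ws)
  then have "s * (prod_list ws * prod_list (rev ws)) * s = 1" by simp
  then show ?case by (simp add: mult.assoc)
qed simp

lemma prod_list_rev_inverse':
  assumes "\<forall>s\<in>set ws. s * s = (1::'a::monoid_mult)"
  shows "prod_list (rev ws) * prod_list ws = 1"
  using prod_list_rev_inverse[of "rev ws"] assms by simp

lemma reflections_braid:
  fixes s t :: "'a::monoid_mult"
  shows "reflections (concat (replicate k [s, t])) = map (\<lambda>j. (s * t) ^ j * s) [0..<2 * k]"
proof (induction k)
  case (Suc k)
  have "[0..<2 * Suc k] = 0 # 1 # map (\<lambda>j. j + 2) [0..<2 * k]"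
    by (simp add: upt_conv_Cons map_Suc_upt[symmetric] del: upt_Suc)
  moreover have "s * (t * ((s * t) ^ j * (s * (t * s)))) = (s * t) ^ (j + 2) * s" for j
    by (simp add: mult.assoc power_commutes[symmetric])
  ultimately show ?case using Suc by (simp add: comp_def mult.assoc del: upt_Suc)
qed simp

text \<open>Every element occurs in \<open>M\<close> and \<open>N\<close> with the same parity.\<close>

definition parity_equiv :: "'a multiset \<Rightarrow> 'a multiset \<Rightarrow> bool" where
  "parity_equiv M N \<longleftrightarrow> (\<exists>C D. M + C + C = N + D + D)"

lemma parity_equiv_refl: "parity_equiv M M"
  unfolding parity_equiv_def by blast

lemma parity_equiv_sym: "parity_equiv M N \<Longrightarrow> parity_equiv N M"
  unfolding parity_equiv_def by metis

lemma parity_equiv_trans: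
  assumes "parity_equiv M N" "parity_equiv N P"
  shows "parity_equiv M P"
proof -
  obtain C D E F where CD: "M + C + C = N + D + D" and EF: "N + E + E = P + F + F"
    using assms unfolding parity_equiv_def by blast
  have "M + (C + E) + (C + E) = (M + C + C) + E + E" by (simp add: ac_simps)
  also have "\<dots> = (N + E + E) + D + D" using CD by (simp add: ac_simps)
  also have "\<dots> = P + (F + D) + (F + D)" using EF by (simp add: ac_simps)
  finally show ?thesis unfolding parity_equiv_def by blast
qed

lemma parity_equiv_add:
  assumes "parity_equiv M N" "parity_equiv M' N'"
  shows "parity_equiv (M + M') (N + N')"
proof -
  obtain C D E F where CD: "M + C + C = N + D + D" and EF: "M' + E + E = N' + F + F"
    using assms unfolding parity_equiv_def by blast
  have "(M + M') + (C + E) + (C + E) = (M + C + C) + (M' + E + E)" by (simp add: ac_simps)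
  also have "\<dots> = (N + N') + (D + F) + (D + F)" using CD EF by (simp add: ac_simps)
  finally show ?thesis unfolding parity_equiv_def by blast
qed

lemma parity_equiv_image_mset:
  assumes "parity_equiv M N"
  shows "parity_equiv (image_mset f M) (image_mset f N)"
proof -
  obtain C D where "M + C + C = N + D + D"
    using assms unfolding parity_equiv_def by blast
  then have "image_mset f M + image_mset f C + image_mset f C =
             image_mset f N + image_mset f D + image_mset f D"
    by (metis image_mset_union)
  then show ?thesis unfolding parity_equiv_def by blast
qed

lemma parity_equiv_count:
  assumes "parity_equiv M N"
  shows "odd (count M x) \<longleftrightarrow> odd (count N x)"
proof -
  obtain C D where "M + C + C = N + D + D"
    using assms unfolding parity_equiv_def by blast
  then have "count M x + 2 * count C x = count N x + 2 * count D x"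
    by (metis count_union mult_2 add.assoc)
  then show ?thesis by presburger
qed

text \<open>The parity of the number of occurrences of each reflection in a word is invariant
  under the Coxeter relations; the products of the word and of its reverse are carried along
  because conjugation by a prefix enters the reflections of a longer word.\<close>

lemma cox_cong_invariants:
  assumes involutions: "\<forall>s\<in>S. s * s = (1::'a::monoid_mult)"
  shows "cox_cong S u v \<Longrightarrow> prod_list u = prod_list v \<and> prod_list (rev u) = prod_list (rev v)
           \<and> parity_equiv (mset (reflections u)) (mset (reflections v))"
proof (induction rule: cox_cong.induct)
  case (cc_refl u)
  then show ?case by (simp add: parity_equiv_refl)
next
  case (cc_sym u v)
  then show ?case by (simp add: parity_equiv_sym)
next
  case (cc_trans u v w)
  then show ?case by (metis parity_equiv_trans)
next
  case (cc_ctxt u v x y)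
  then have prod: "prod_list u = prod_list v" "prod_list (rev u) = prod_list (rev v)"
    and par: "parity_equiv (mset (reflections u)) (mset (reflections v))" by auto
  let ?cx = "\<lambda>t. prod_list x * t * prod_list (rev x)"
  let ?cv = "\<lambda>t. prod_list v * t * prod_list (rev v)"
  have "parity_equiv
      (mset (reflections x) + (image_mset ?cx (mset (reflections u))
         + image_mset (?cx \<circ> ?cv) (mset (reflections y))))
      (mset (reflections x) + (image_mset ?cx (mset (reflections v))
         + image_mset (?cx \<circ> ?cv) (mset (reflections y))))"
    by (intro parity_equiv_add parity_equiv_refl parity_equiv_image_mset par)
  then show ?case by (simp add: reflections_append prod)
next
  case (cc_sq s)
  then have "s * s = 1" using involutions by auto
  then have "mset (reflections [s, s]) + {#} + {#} = mset (reflections []) + {#s#} + {#s#}"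
    by (simp add: mult.assoc)
  then have "parity_equiv (mset (reflections [s, s])) (mset (reflections []))"
    unfolding parity_equiv_def by blast
  then show ?case using \<open>s * s = 1\<close> by simp
next
  case (cc_braid s t)
  let ?m = "cox_m s t"
  let ?w = "concat (replicate ?m [s, t])"
  have m: "0 < ?m" "(s * t) ^ ?m = 1"
    using LeastI_ex[OF cc_braid(3)] unfolding cox_m_def by auto
  have "prod_list (concat (replicate k [s, t])) = (s * t) ^ k" for k
    by (induction k) (simp_all add: mult.assoc)
  then have prod: "prod_list ?w = 1" using m by simp
  moreover have "prod_list (rev ?w) = 1"
    using prod_list_rev_inverse'[of ?w] prod involutions cc_braid by auto
  moreover
  txt \<open>The reflections of the braid word run through one period of \<open>(s t)^j s\<close> twice.\<close>
  define B where "B = map (\<lambda>j. (s * t) ^ j * s) [0..<?m]"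
  have "reflections ?w = B @ B"
  proof (rule nth_equalityI)
    fix j assume "j < length (reflections ?w)"
    then have j: "j < 2 * ?m" by (simp add: length_concat sum_list_replicate)
    have "(s * t) ^ j = (s * t) ^ (j - ?m)" if "?m \<le> j"
      using m that by (metis le_add_diff_inverse power_add mult_1_left)
    moreover have "j - ?m < ?m" using j by linarith
    ultimately show "reflections ?w ! j = (B @ B) ! j"
      using j by (simp add: reflections_braid B_def nth_append)
  qed (simp add: B_def length_concat sum_list_replicate)
  then have "mset (reflections ?w) + {#} + {#} = mset (reflections []) + mset B + mset B"
    by simp
  then have "parity_equiv (mset (reflections ?w)) (mset (reflections []))"
    unfolding parity_equiv_def by blast
  ultimately show ?case by simp
qed

lemma coxeter_system_involution: "coxeter_system W S \<Longrightarrow> s \<in> S \<Longrightarrow> s * s = 1"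
  unfolding coxeter_system_def by blast

lemma coxeter_system_one_notin: "coxeter_system W S \<Longrightarrow> 1 \<notin> S"
  unfolding coxeter_system_def by blast

lemma coxeter_system_cox_cong:
  "coxeter_system W S \<Longrightarrow> u \<in> lists S \<Longrightarrow> v \<in> lists S \<Longrightarrow> prod_list u = prod_list v
     \<Longrightarrow> cox_cong S u v"
  unfolding coxeter_system_def by blast

lemma reflection_deletion:
  assumes "\<forall>s\<in>set ws. s * s = (1::'a::monoid_mult)" "t \<in> set (reflections ws)"
  shows "\<exists>j<length ws. t * prod_list ws = prod_list (nths ws (- {j}))"
  using assms
proof (induction ws arbitrary: t)
  case (Cons s ws)
  then have ss: "s * s = 1" by simp
  show ?case
  proof (cases "t = s")
    case True
    then have "t * prod_list (s # ws) = prod_list (nths (s # ws) (- {0}))"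
      using ss by (simp add: nths_Cons nths_all flip: mult.assoc)
    then show ?thesis by auto
  next
    case False
    then obtain t' where t': "t' \<in> set (reflections ws)" "t = s * t' * s"
      using Cons.prems by auto
    then obtain j where j: "j < length ws" "t' * prod_list ws = prod_list (nths ws (- {j}))"
      using Cons by auto
    have "{k. Suc k \<in> - {Suc j}} = - {j}" by auto
    then have "nths (s # ws) (- {Suc j}) = s # nths ws (- {j})"
      by (simp add: nths_Cons)
    moreover have "t * prod_list (s # ws) = s * (t' * prod_list ws)"
      using t'(2) ss by (simp add: mult.assoc) (simp flip: mult.assoc)
    ultimately show ?thesis using j by (intro exI[of _ "Suc j"]) simp
  qed
qed simp

lemma length_nths_le: "length (nths xs A) \<le> length xs"
proof -
  have "card {i. i < length xs \<and> i \<in> A} \<le> card {i. i < length xs}"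
    by (rule card_mono) auto
  then show ?thesis by (simp add: length_nths)
qed

lemma shorter_subword_if_not_distinct_reflections:
  assumes "\<forall>s\<in>set ws. s * s = (1::'a::monoid_mult)" "\<not> distinct (reflections ws)"
  shows "\<exists>A. length (nths ws A) < length ws \<and> prod_list (nths ws A) = prod_list ws"
  using assms
proof (induction ws)
  case (Cons s ws)
  then have ss: "s * s = 1" by simp
  show ?case
  proof (cases "distinct (reflections ws)")
    case False
    then obtain A where A: "length (nths ws A) < length ws" "prod_list (nths ws A) = prod_list ws"
      using Cons by auto
    have "{j. Suc j \<in> Suc ` A} = A" by auto
    then have "nths (s # ws) (insert 0 (Suc ` A)) = s # nths ws A" by (simp add: nths_Cons)
    then show ?thesis using A by (intro exI[of _ "insert 0 (Suc ` A)"]) simp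
  next
    case True
    have "inj (\<lambda>t. s * t * s)"
    proof (rule injI)
      fix a b assume "s * a * s = s * b * s"
      then have "s * (s * a * s) * s = s * (s * b * s) * s" by simp
      then have "(s * s) * a * (s * s) = (s * s) * b * (s * s)" by (simp add: mult.assoc)
      then show "a = b" using ss by simp
    qed
    then have "distinct (map (\<lambda>t. s * t * s) (reflections ws))"
      using True by (simp add: distinct_map inj_on_subset[of _ UNIV])
    then obtain t where "t \<in> set (reflections ws)" "s = s * t * s"
      using Cons.prems(2) by auto
    moreover from this(2) have "t = s"
      using ss by (metis mult.assoc mult_1_left mult_1_right)
    ultimately obtain j where j: "j < length ws" "s * prod_list ws = prod_list (nths ws (- {j}))"
      using reflection_deletion[of ws s] Cons.prems by auto
    have "{k. Suc k \<in> - {0, Suc j}} = - {j}" by auto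
    then have "nths (s # ws) (- {0, Suc j}) = nths ws (- {j})" by (simp add: nths_Cons)
    moreover have "length (nths ws (- {j})) < length (s # ws)"
      using length_nths_le[of ws "- {j}"] by simp
    ultimately show ?thesis using j by (intro exI[of _ "- {0, Suc j}"]) simp
  qed
qed simp

lemma cox_len_le_length: "ws \<in> lists S \<Longrightarrow> cox_len S (prod_list ws) \<le> length ws"
  unfolding cox_len_def by (rule Least_le) blast

lemma cox_len_attained:
  assumes "ws \<in> lists S"
  obtains vs where "vs \<in> lists S" "length vs = cox_len S (prod_list ws)" "prod_list vs = prod_list ws"
  using LeastI_ex[where P = "\<lambda>n. \<exists>vs\<in>lists S. length vs = n \<and> prod_list vs = prod_list ws"] assms
  unfolding cox_len_def by blast

text \<open>Every word with the same product contains each reflection of \<open>ws\<close> an odd number of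
  times.\<close>

lemma length_le_cox_len_if_distinct_reflections:
  assumes cs: "coxeter_system W (S::'a::monoid_mult set)" and ws: "ws \<in> lists S"
    and distinct: "distinct (reflections ws)"
  shows "length ws \<le> cox_len S (prod_list ws)"
proof -
  obtain vs where vs: "vs \<in> lists S" "length vs = cox_len S (prod_list ws)"
    "prod_list vs = prod_list ws"
    using cox_len_attained[OF ws] .
  have "cox_cong S ws vs"
    using coxeter_system_cox_cong[OF cs ws vs(1)] vs(3) by simp
  then have par: "parity_equiv (mset (reflections ws)) (mset (reflections vs))"
    using cox_cong_invariants coxeter_system_involution[OF cs] by blast
  have "set (reflections ws) \<subseteq> set (reflections vs)"
  proof
    fix t assume "t \<in> set (reflections ws)"
    then have "count (mset (reflections ws)) t = 1"
      using distinct by (simp add: distinct_count_atmost_1)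
    then have "odd (count (mset (reflections vs)) t)" using parity_equiv_count[OF par, of t] by simp
    then have "count (mset (reflections vs)) t \<noteq> 0" by presburger
    then show "t \<in> set (reflections vs)" by (simp add: count_mset_0_iff)
  qed
  then have "card (set (reflections ws)) \<le> card (set (reflections vs))"
    by (simp add: card_mono)
  also have "\<dots> \<le> length vs" using card_length[of "reflections vs"] by simp
  finally show ?thesis using distinct vs(2) by (simp add: distinct_card)
qed

lemma reduced_word_in_subword_closed:
  assumes cs: "coxeter_system W (S::'a::monoid_mult set)" and "P \<subseteq> lists S"
    and closed: "\<And>ws A. ws \<in> P \<Longrightarrow> nths ws A \<in> P" and "ws \<in> P"
  obtains vs where "vs \<in> P" "prod_list vs = prod_list ws" "length vs = cox_len S (prod_list ws)"
proof -
  obtain vs where vs: "vs \<in> P" "prod_list vs = prod_list ws"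
    and shortest: "\<And>us. us \<in> P \<Longrightarrow> prod_list us = prod_list ws \<Longrightarrow> length vs \<le> length us"
    using ex_has_least_nat[of "\<lambda>vs. vs \<in> P \<and> prod_list vs = prod_list ws" ws length] \<open>ws \<in> P\<close>
    by blast
  have vsS: "vs \<in> lists S" using vs \<open>P \<subseteq> lists S\<close> by blast
  have "distinct (reflections vs)"
  proof (rule ccontr)
    assume "\<not> distinct (reflections vs)"
    moreover have "\<forall>s\<in>set vs. s * s = 1" using coxeter_system_involution[OF cs] vsS by auto
    ultimately obtain A where "length (nths vs A) < length vs" "prod_list (nths vs A) = prod_list vs"
      using shorter_subword_if_not_distinct_reflections by blast
    then show False using shortest[of "nths vs A"] closed[OF vs(1)] vs(2) by simp
  qed
  then have "length vs \<le> cox_len S (prod_list ws)"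
    using length_le_cox_len_if_distinct_reflections[OF cs vsS] vs(2) by simp
  moreover have "cox_len S (prod_list ws) \<le> length vs"
    using cox_len_le_length[OF vsS] vs(2) by simp
  ultimately show thesis using that vs by simp
qed

section \<open>Standard parabolic subgroups\<close>

lemma parab_one: "1 \<in> parab I"
  unfolding parab_def by (auto intro!: exI[of _ "[]"])

lemma parab_gen: "s \<in> I \<Longrightarrow> s \<in> parab I"
  unfolding parab_def by (auto intro!: exI[of _ "[s]"])

lemma parab_mult:
  assumes "a \<in> parab I" "b \<in> parab I"
  shows "a * b \<in> parab I"
proof -
  obtain us vs where "us \<in> lists I" "vs \<in> lists I" "a = prod_list us" "b = prod_list vs"
    using assms unfolding parab_def by blast
  then show ?thesis unfolding parab_def by (intro CollectI exI[of _ "us @ vs"]) auto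
qed

lemma parab_least:
  assumes "1 \<in> H" "\<And>a b. a \<in> H \<Longrightarrow> b \<in> H \<Longrightarrow> a * b \<in> H" "I \<subseteq> H"
  shows "parab I \<subseteq> H"
proof
  fix x assume "x \<in> parab I"
  then obtain ws where ws: "ws \<in> lists I" "x = prod_list ws" unfolding parab_def by blast
  have "prod_list ws \<in> H" using ws(1) assms by (induction ws) auto
  then show "x \<in> H" using ws by simp
qed

lemma parab_mono: "I \<subseteq> J \<Longrightarrow> parab I \<subseteq> parab J"
  by (intro parab_least parab_one parab_mult) (auto intro: parab_gen)

lemma prod_list_rev_in_parab: "ws \<in> lists I \<Longrightarrow> prod_list (rev ws) \<in> parab I"
  unfolding parab_def by (intro CollectI exI[of _ "rev ws"]) auto

lemma nths_in_lists: "xs \<in> lists X \<Longrightarrow> nths xs A \<in> lists X"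
  using set_nths_subset[of xs A] by auto

lemma parab_inter_generators:
  assumes cs: "coxeter_system W (S::'a::monoid_mult set)" and "I \<subseteq> S"
  shows "S \<inter> parab I = I"
proof
  show "I \<subseteq> S \<inter> parab I" using \<open>I \<subseteq> S\<close> parab_gen by blast
next
  show "S \<inter> parab I \<subseteq> I"
  proof
    fix s assume s: "s \<in> S \<inter> parab I"
    then obtain ws where ws: "ws \<in> lists I" "prod_list ws = s" unfolding parab_def by blast
    obtain vs where vs: "vs \<in> lists I" "prod_list vs = s" "length vs = cox_len S s"
      using reduced_word_in_subword_closed[OF cs lists_mono[OF \<open>I \<subseteq> S\<close>] nths_in_lists ws(1)] ws(2)
      by metis
    have "length vs \<le> 1" using vs(3) cox_len_le_length[of "[s]" S] s by simp
    moreover have "vs \<noteq> []" using vs(2) s coxeter_system_one_notin[OF cs] by auto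
    ultimately obtain a where "vs = [a]" by (cases vs) auto
    then show "s \<in> I" using vs by simp
  qed
qed

lemma parab_inj:
  assumes "coxeter_system W (S::'a::monoid_mult set)" "I \<subseteq> S" "J \<subseteq> S" "parab I = parab J"
  shows "I = J"
proof -
  have "I = S \<inter> parab I" using parab_inter_generators[OF assms(1,2)] ..
  also have "\<dots> = J" using parab_inter_generators[OF assms(1,3)] assms(4) by simp
  finally show ?thesis .
qed

lemma reduced_word_parab_triple:
  assumes cs: "coxeter_system W (S::'a::monoid_mult set)" and "I \<subseteq> S" "J \<subseteq> S" "L \<subseteq> S"
    and "a \<in> parab I" "k \<in> parab L" "b \<in> parab J"
  obtains \<alpha> \<kappa> \<beta> where "\<alpha> \<in> lists I" "\<kappa> \<in> lists L" "\<beta> \<in> lists J"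
    "prod_list \<alpha> * prod_list \<kappa> * prod_list \<beta> = a * k * b"
    "length \<alpha> + length \<kappa> + length \<beta> = cox_len S (a * k * b)"
proof -
  define P where "P = {\<alpha> @ \<kappa> @ \<beta> | \<alpha> \<kappa> \<beta>. \<alpha> \<in> lists I \<and> \<kappa> \<in> lists L \<and> \<beta> \<in> lists J}"
  have "P \<subseteq> lists S"
  proof
    fix ws assume "ws \<in> P"
    then obtain \<alpha> \<kappa> \<beta> where "ws = \<alpha> @ \<kappa> @ \<beta>" "\<alpha> \<in> lists S" "\<kappa> \<in> lists S" "\<beta> \<in> lists S"
      unfolding P_def using lists_mono[OF assms(2)] lists_mono[OF assms(3)] lists_mono[OF assms(4)]
      by blast
    then show "ws \<in> lists S" by simp
  qed
  moreover have "nths ws A \<in> P" if "ws \<in> P" for ws A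
  proof -
    from that obtain \<alpha> \<kappa> \<beta> where "ws = \<alpha> @ \<kappa> @ \<beta>" "\<alpha> \<in> lists I" "\<kappa> \<in> lists L" "\<beta> \<in> lists J"
      unfolding P_def by auto
    moreover have "nths ws A = nths \<alpha> A @ nths \<kappa> {j. j + length \<alpha> \<in> A}
        @ nths \<beta> {j. j + length \<kappa> + length \<alpha> \<in> A}"
      using \<open>ws = \<alpha> @ \<kappa> @ \<beta>\<close> by (simp add: nths_append)
    ultimately show ?thesis unfolding P_def
      by (intro CollectI exI[of _ "nths \<alpha> _"] exI[of _ "nths \<kappa> _"] exI[of _ "nths \<beta> _"])
        (simp add: nths_in_lists)
  qed
  moreover obtain ws where "ws \<in> P" "prod_list ws = a * k * b"
  proof -
    obtain \<alpha> \<kappa> \<beta> where "\<alpha> \<in> lists I" "\<kappa> \<in> lists L" "\<beta> \<in> lists J"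
      "a = prod_list \<alpha>" "k = prod_list \<kappa>" "b = prod_list \<beta>"
      using assms(5-7) unfolding parab_def by blast
    then show thesis using that[of "\<alpha> @ \<kappa> @ \<beta>"] unfolding P_def by (auto simp: mult.assoc)
  qed
  ultimately obtain vs where "vs \<in> P" "prod_list vs = a * k * b" "length vs = cox_len S (a * k * b)"
    using reduced_word_in_subword_closed[OF cs] by metis
  then obtain \<alpha> \<kappa> \<beta> where "\<alpha> \<in> lists I" "\<kappa> \<in> lists L" "\<beta> \<in> lists J"
    "prod_list (\<alpha> @ \<kappa> @ \<beta>) = a * k * b" "length (\<alpha> @ \<kappa> @ \<beta>) = cox_len S (a * k * b)"
    unfolding P_def by blast
  then show thesis using that by (simp add: mult.assoc)
qed

text \<open>In a reduced word \<open>\<alpha> \<kappa> \<beta>\<close> for \<open>w\<close>, minimality forces \<open>\<alpha>\<close> and \<open>\<beta>\<close> to be empty.\<close>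

lemma min_double_coset_rep_in_parab:
  assumes cs: "coxeter_system W (S::'a::monoid_mult set)" and "I \<subseteq> S" "J \<subseteq> S" "L \<subseteq> S"
    and "a \<in> parab I" "k \<in> parab L" "b \<in> parab J" "w = a * k * b"
    and minimal: "\<forall>a'\<in>parab I. \<forall>b'\<in>parab J. cox_len S w \<le> cox_len S (a' * w * b')"
  shows "w \<in> parab L"
proof -
  obtain \<alpha> \<kappa> \<beta> where words: "\<alpha> \<in> lists I" "\<kappa> \<in> lists L" "\<beta> \<in> lists J"
    and prod: "prod_list \<alpha> * prod_list \<kappa> * prod_list \<beta> = w"
    and reduced: "length \<alpha> + length \<kappa> + length \<beta> = cox_len S w"
    using reduced_word_parab_triple[OF assms(1-7)] assms(8) by metis
  have "\<forall>s\<in>set (\<alpha> @ \<beta>). s * s = 1"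
    using coxeter_system_involution[OF cs] words assms(2,3) by auto
  then have "prod_list (rev \<alpha>) * prod_list \<alpha> = 1" "prod_list \<beta> * prod_list (rev \<beta>) = 1"
    using prod_list_rev_inverse[of \<beta>] prod_list_rev_inverse'[of \<alpha>] by auto
  then have "prod_list (rev \<alpha>) * w * prod_list (rev \<beta>) = prod_list \<kappa>"
    unfolding prod[symmetric] by (metis mult.assoc mult_1_left mult_1_right)
  then have "cox_len S w \<le> cox_len S (prod_list \<kappa>)"
    using minimal prod_list_rev_in_parab[OF words(1)] prod_list_rev_in_parab[OF words(3)] by metis
  also have "\<dots> \<le> length \<kappa>" using cox_len_le_length[of \<kappa> S] words(2) assms(4) by auto
  finally have "length \<alpha> = 0 \<and> length \<beta> = 0" using reduced by linarith
  then show ?thesis using prod words(2) unfolding parab_def by auto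
qed

section \<open>Units, conjugation and the natural order\<close>

lemma inverse_unique:
  fixes u v v' :: "'a::monoid_mult"
  assumes "v * u = 1" "u * v' = 1"
  shows "v = v'"
  by (metis assms mult.assoc mult_1_left mult_1_right)

lemma unitgrp_uinv:
  assumes "u \<in> unitgrp"
  shows "u * uinv u = 1" "uinv u * u = (1::'a::monoid_mult)"
proof -
  obtain v where v: "u * v = 1" "v * u = 1" using assms unfolding unitgrp_def by blast
  have "uinv u = v" unfolding uinv_def
    by (rule the_equality) (use v inverse_unique in blast)+
  then show "u * uinv u = 1" "uinv u * u = 1" using v by auto
qed

lemma uinv_eqI:
  fixes u v :: "'a::monoid_mult"
  assumes "u * v = 1" "v * u = 1"
  shows "uinv u = v"
proof -
  have "u \<in> unitgrp" using assms unfolding unitgrp_def by blast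
  then show ?thesis using unitgrp_uinv assms inverse_unique by metis
qed

lemma one_in_unitgrp [simp]: "1 \<in> unitgrp"
  unfolding unitgrp_def by auto

lemma uinv_in_unitgrp: "u \<in> unitgrp \<Longrightarrow> uinv u \<in> unitgrp"
  using unitgrp_uinv[of u] unfolding unitgrp_def by blast

lemma mult_in_unitgrp:
  assumes "u \<in> unitgrp" "v \<in> unitgrp"
  shows "u * v \<in> unitgrp"
proof -
  have "(u * v) * (uinv v * uinv u) = 1" "(uinv v * uinv u) * (u * v) = 1"
    using unitgrp_uinv[OF assms(1)] unitgrp_uinv[OF assms(2)] by (metis mult.assoc mult_1_left)+
  then show ?thesis unfolding unitgrp_def by blast
qed

lemma uinv_mult:
  assumes "u \<in> unitgrp" "v \<in> unitgrp"
  shows "uinv (u * v) = uinv v * uinv u"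
  using unitgrp_uinv[OF assms(1)] unitgrp_uinv[OF assms(2)]
  by (intro uinv_eqI) (metis mult.assoc mult_1_left)+

definition conjugate :: "'a::monoid_mult \<Rightarrow> 'a \<Rightarrow> 'a" where
  "conjugate w z = w * z * uinv w"

lemma uinv_one [simp]: "uinv 1 = 1"
  by (rule uinv_eqI) simp_all

lemma conjugate_one [simp]: "conjugate 1 z = z"
  unfolding conjugate_def by simp

lemma conjugate_mult:
  "w \<in> unitgrp \<Longrightarrow> conjugate w (a * b) = conjugate w a * conjugate w b"
  unfolding conjugate_def using unitgrp_uinv[of w] by (simp add: mult.assoc) (metis mult.assoc mult_1_left)

lemma conjugate_conjugate:
  "u \<in> unitgrp \<Longrightarrow> v \<in> unitgrp \<Longrightarrow> conjugate u (conjugate v z) = conjugate (u * v) z"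
  unfolding conjugate_def by (simp add: uinv_mult mult.assoc)

lemma conjugate_uinv_cancel:
  assumes "w \<in> unitgrp"
  shows "conjugate (uinv w) (conjugate w z) = z" "conjugate w (conjugate (uinv w) z) = z"
  using conjugate_conjugate[of "uinv w" w z] conjugate_conjugate[of w "uinv w" z]
    uinv_in_unitgrp[OF assms] unitgrp_uinv[OF assms] assms by simp_all

lemma conjugate_idems: "w \<in> unitgrp \<Longrightarrow> z \<in> idems \<Longrightarrow> conjugate w z \<in> idems"
  using conjugate_mult[of w z z] unfolding idems_def by simp

lemma conjugate_ileq: "w \<in> unitgrp \<Longrightarrow> ileq a b \<Longrightarrow> ileq (conjugate w a) (conjugate w b)"
  using conjugate_mult[of w a b] conjugate_mult[of w b a] unfolding ileq_def by simp

lemma Wc_iff_conjugate: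
  assumes "w \<in> unitgrp"
  shows "w \<in> Wc z \<longleftrightarrow> conjugate w z = z"
proof -
  have "w * z = z * w \<longleftrightarrow> w * z * uinv w = z"
    using unitgrp_uinv[OF assms] by (metis mult.assoc mult_1_right)
  then show ?thesis using assms unfolding Wc_def conjugate_def by simp
qed

lemma ileq_refl: "a \<in> idems \<Longrightarrow> ileq a a"
  unfolding ileq_def idems_def by simp

lemma ileq_trans: "ileq a b \<Longrightarrow> ileq b c \<Longrightarrow> ileq a c"
  unfolding ileq_def by (metis mult.assoc)

lemma ileq_antisym: "ileq a b \<Longrightarrow> ileq b a \<Longrightarrow> a = b"
  unfolding ileq_def by metis

lemma Wc_subgroup:
  "1 \<in> Wc z" "a \<in> Wc z \<Longrightarrow> b \<in> Wc z \<Longrightarrow> a * b \<in> Wc z" "a \<in> Wc z \<Longrightarrow> uinv a \<in> Wc z"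
proof -
  show "1 \<in> Wc z" unfolding Wc_def by simp
  show "a * b \<in> Wc z" if "a \<in> Wc z" "b \<in> Wc z"
  proof -
    have "a * b * z = a * (z * b)" using that unfolding Wc_def by (simp add: mult.assoc)
    also have "\<dots> = z * (a * b)" using that unfolding Wc_def by (simp flip: mult.assoc)
    finally show ?thesis using that mult_in_unitgrp unfolding Wc_def by blast
  qed
  show "uinv a \<in> Wc z" if "a \<in> Wc z"
  proof -
    have "a \<in> unitgrp" using that unfolding Wc_def by simp
    then show ?thesis using that Wc_iff_conjugate conjugate_uinv_cancel uinv_in_unitgrp by metis
  qed
qed

lemma Wstar_subgroup:
  "1 \<in> Wstar z" "a \<in> Wstar z \<Longrightarrow> b \<in> Wstar z \<Longrightarrow> a * b \<in> Wstar z"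
  unfolding Wstar_def by (auto simp: mult_in_unitgrp) (metis mult.assoc)+

lemma Wstar_subset_Wc: "Wstar z \<subseteq> Wc z"
  unfolding Wstar_def Wc_def by auto

lemma Wstar_conjugate_involution:
  assumes "s \<in> unitgrp" "s * s = 1" "s * f = f * s" "k \<in> Wstar f"
  shows "s * k * s \<in> Wstar f"
proof -
  have k: "k \<in> unitgrp" "k * f = f" "f * k = f" using assms(4) unfolding Wstar_def by auto
  have "s * k * s * f = s * (k * f) * s" using assms(3) by (simp add: mult.assoc)
  also have "\<dots> = f * (s * s)" using k(2) assms(3) by (simp add: mult.assoc)
  finally have "s * k * s * f = f" using assms(2) by simp
  moreover have "f * (s * k * s) = s * (f * k) * s" using assms(3) by (simp flip: mult.assoc)
  moreover have "s * (f * k) * s = f * (s * s)" using k(3) assms(3) by (simp add: mult.assoc)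
  ultimately have "f * (s * k * s) = f" using assms(2) by simp
  moreover have "s * k * s \<in> unitgrp" using mult_in_unitgrp assms(1) k(1) by blast
  ultimately show ?thesis using \<open>s * k * s * f = f\<close> unfolding Wstar_def by blast
qed

lemma Wstar_conjugate_below:
  assumes "k \<in> Wstar y" "ileq z y"
  shows "conjugate k z = z"
proof -
  have k: "k \<in> unitgrp" "k * y = y" "y * k = y" using assms(1) unfolding Wstar_def by auto
  have z: "z * y = z" "y * z = z" using assms(2) unfolding ileq_def by auto
  have "y * uinv k = y" using k unitgrp_uinv[OF k(1)] by (metis mult.assoc mult_1_right)
  then have "z * uinv k = z" using z by (metis mult.assoc)
  moreover have "k * z = z" using k z by (metis mult.assoc)
  ultimately show ?thesis unfolding conjugate_def by simp
qed

lemma chain_ileq: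
  assumes chain: "\<forall>i. Suc i < m \<longrightarrow> ileq (f i) (f (Suc i))" and "f i \<in> idems" and "i \<le> j"
  shows "j < m \<Longrightarrow> ileq (f i) (f j)"
  using assms(3)
proof (induction j rule: dec_induct)
  case base
  show ?case using ileq_refl[OF assms(2)] .
next
  case (step j)
  then show ?case using chain ileq_trans Suc_lessD by blast
qed

section \<open>Generalised Renner--Coxeter systems\<close>

locale gen_RC =
  fixes \<Lambda> S :: "'a::monoid_mult set"
  assumes gen_RC_system: "gen_RC_system \<Lambda> S"
begin

lemma idems_commute:
  fixes e f :: 'a
  assumes "e \<in> idems" "f \<in> idems"
  shows "e * f = f * e"
proof -
  have "factorisable (UNIV :: 'a set)"
    using gen_RC_system unfolding gen_RC_system_def by (elim conjE)
  then have "\<forall>e\<in>idems. \<forall>f\<in>idems. e * f = f * (e::'a)"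
    unfolding factorisable_def by (elim conjE)
  then show ?thesis using assms by blast
qed

lemma Lambda_subset_idems: "\<Lambda> \<subseteq> idems"
  using gen_RC_system unfolding gen_RC_system_def by blast

lemma Lambda_orbit_representative:
  assumes "e \<in> idems"
  shows "\<exists>!f. f \<in> \<Lambda> \<and> (\<exists>w\<in>unitgrp. conjugate w f = e)"
proof -
  have "\<forall>e\<in>idems. \<exists>!f. f \<in> \<Lambda> \<and> (\<exists>w\<in>unitgrp. w * f * uinv w = e)"
    using gen_RC_system unfolding gen_RC_system_def by (elim conjE)
  then show ?thesis using assms unfolding conjugate_def by (rule bspec)
qed

lemma coxeter: "coxeter_system unitgrp S"
  using gen_RC_system unfolding gen_RC_system_def by blast

lemma ileq_conjugate_Lambda:
  assumes "e1 \<in> idems" "e2 \<in> idems" "ileq e1 e2"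
  shows "\<exists>w\<in>unitgrp. \<exists>f1\<in>\<Lambda>. \<exists>f2\<in>\<Lambda>. ileq f1 f2 \<and> conjugate w f1 = e1 \<and> conjugate w f2 = e2"
  using gen_RC_system assms unfolding gen_RC_system_def conjugate_def by blast

lemma Wc_parab: "e \<in> \<Lambda> \<Longrightarrow> \<exists>I. I \<subseteq> S \<and> Wc e = parab I"
  using gen_RC_system unfolding gen_RC_system_def by blast

lemma Wstar_parab: "e \<in> \<Lambda> \<Longrightarrow> \<exists>I. I \<subseteq> S \<and> Wstar e = parab I"
  using gen_RC_system unfolding gen_RC_system_def by blast

lemma lamstar_mono: "e \<in> \<Lambda> \<Longrightarrow> f \<in> \<Lambda> \<Longrightarrow> ileq e f \<Longrightarrow> lamstar S e \<subseteq> lamstar S f"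
  using gen_RC_system unfolding gen_RC_system_def by blast

lemma generators_in_unitgrp: "S \<subseteq> unitgrp"
  using coxeter unfolding coxeter_system_def by blast

lemma Lambda_conjugate_eq:
  assumes "f \<in> \<Lambda>" "f' \<in> \<Lambda>" "u \<in> unitgrp" "u' \<in> unitgrp" "conjugate u f = conjugate u' f'"
  shows "f = f'"
proof -
  have "conjugate u f \<in> idems" using assms Lambda_subset_idems conjugate_idems by blast
  then obtain g where "\<And>h. h \<in> \<Lambda> \<and> (\<exists>w\<in>unitgrp. conjugate w h = conjugate u f) \<Longrightarrow> h = g"
    using Lambda_orbit_representative by metis
  then show ?thesis using assms by metis
qed

lemma conjugate_ileq_eq:
  fixes e1 e2 :: 'a
  assumes "e1 \<in> idems" "e2 \<in> idems" "ileq e1 e2" "u \<in> unitgrp" "conjugate u e1 = e2"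
  shows "e1 = e2"
proof -
  obtain w f1 f2 where w: "w \<in> unitgrp" "f1 \<in> \<Lambda>" "f2 \<in> \<Lambda>" "ileq f1 f2"
    "conjugate w f1 = e1" "conjugate w f2 = e2"
    using ileq_conjugate_Lambda[OF assms(1-3)] by blast
  have "conjugate (u * w) f1 = conjugate u (conjugate w f1)"
    using conjugate_conjugate[OF assms(4) w(1)] by simp
  then have "conjugate (u * w) f1 = conjugate w f2" using w assms(5) by simp
  then have "f1 = f2"
    using Lambda_conjugate_eq[OF w(2,3) mult_in_unitgrp[OF assms(4) w(1)] w(1)] by blast
  then show ?thesis using w by simp
qed

lemma idems_mult:
  fixes a b :: 'a
  assumes "a \<in> idems" "b \<in> idems"
  shows "a * b \<in> idems" "ileq (a * b) a" "ileq (a * b) b"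
proof -
  have ba: "b * a = a * b" using idems_commute assms by simp
  have aa: "a * a = a" "b * b = b" using assms unfolding idems_def by auto
  have "a * b * (a * b) = (a * a) * (b * b)" using ba by (simp add: mult.assoc) (simp flip: mult.assoc)
  then show "a * b \<in> idems" using aa unfolding idems_def by simp
  have "a * b * a = (a * a) * b" "a * (a * b) = (a * a) * b"
    using ba by (simp_all add: mult.assoc)
  then show "ileq (a * b) a" using aa unfolding ileq_def by simp
  have "b * (a * b) = a * (b * b)" using ba by (simp flip: mult.assoc)
  then show "ileq (a * b) b" using aa unfolding ileq_def by (simp add: mult.assoc)
qed

lemma lam_subset: "e \<in> \<Lambda> \<Longrightarrow> lam S e \<subseteq> S"
  and Wc_eq_parab_lam: "e \<in> \<Lambda> \<Longrightarrow> Wc e = parab (lam S e)"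
proof -
  assume "e \<in> \<Lambda>"
  then obtain I where I: "I \<subseteq> S" "Wc e = parab I" using Wc_parab by blast
  have "lam S e = I" unfolding lam_def
    using I parab_inj[OF coxeter] by (intro the_equality) auto
  then show "lam S e \<subseteq> S" "Wc e = parab (lam S e)" using I by auto
qed

lemma parab_lamstar_subset_Wc: "parab (lamstar S f) \<subseteq> Wc f"
proof (rule parab_least)
  show "lamstar S f \<subseteq> Wc f"
    using generators_in_unitgrp unfolding lamstar_def Wc_def by auto
qed (use Wc_subgroup in auto)

text \<open>\<open>W(f) = W\<^sub>\<star>(f) W\<^sub>\<lambda>\<^sub>\<star>\<^sub>(\<^sub>f\<^sub>)\<close>: a generator in \<open>W(f) \<setminus> W\<^sub>\<star>(f)\<close> lies in
  \<open>\<lambda>\<^sup>\<star>(f)\<close>, and conjugation by such a generator preserves \<open>W\<^sub>\<star>(f)\<close>.\<close>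

lemma Wc_factor_Wstar_parab_lamstar:
  assumes "f \<in> \<Lambda>" "y \<in> Wc f"
  shows "\<exists>k\<in>Wstar f. \<exists>a\<in>parab (lamstar S f). y = k * a"
proof -
  obtain K where K: "K \<subseteq> S" "Wc f = parab K" using Wc_parab assms(1) by blast
  obtain ws where ws: "ws \<in> lists K" "y = prod_list ws" using assms(2) K unfolding parab_def by blast
  have "\<exists>k\<in>Wstar f. \<exists>a\<in>parab (lamstar S f). prod_list vs = k * a" if "vs \<in> lists K" for vs
    using that
  proof (induction vs)
    case Nil
    then show ?case using Wstar_subgroup(1) parab_one by (metis mult_1_left prod_list.Nil)
  next
    case (Cons s vs)
    then obtain k a where ka: "k \<in> Wstar f" "a \<in> parab (lamstar S f)" "prod_list vs = k * a"
      by auto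
    from \<open>s \<in> K\<close> have sS: "s \<in> S" and sW: "s \<in> Wc f" using K parab_gen by auto
    have ss: "s * s = 1" using coxeter_system_involution[OF coxeter sS] .
    show ?case
    proof (cases "s \<in> Wstar f")
      case True
      then show ?thesis using ka Wstar_subgroup(2)[OF True ka(1)] by (metis mult.assoc prod_list.Cons)
    next
      case False
      then have s_lamstar: "s \<in> lamstar S f" using sS sW unfolding lamstar_def Wc_def Wstar_def by auto
      have "s * k * s \<in> Wstar f"
        using Wstar_conjugate_involution generators_in_unitgrp sS ss sW ka(1) unfolding Wc_def by blast
      moreover have "s * a \<in> parab (lamstar S f)" using parab_mult[OF parab_gen[OF s_lamstar] ka(2)] .
      moreover have "prod_list (s # vs) = (s * k * s) * (s * a)"
        using ka(3) ss by (simp add: mult.assoc) (simp flip: mult.assoc)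
      ultimately show ?thesis by blast
    qed
  qed
  then show ?thesis using ws by simp
qed

lemma Wc_factor_Wstar_Wc:
  assumes "h \<in> \<Lambda>" "f \<in> \<Lambda>" "ileq h f" "y \<in> Wc h"
  shows "\<exists>k\<in>Wstar h. \<exists>b\<in>Wc f. y = k * b"
  using Wc_factor_Wstar_parab_lamstar[OF assms(1,4)] parab_mono[OF lamstar_mono[OF assms(1-3)]]
    parab_lamstar_subset_Wc by blast

lemma ileq_Lambda_conjugate_below:
  assumes "e \<in> \<Lambda>" "g \<in> idems" "ileq g e"
  shows "\<exists>u\<in>Wc e. \<exists>f\<in>\<Lambda>. ileq f e \<and> conjugate u f = g"
proof -
  have "e \<in> idems" using assms(1) Lambda_subset_idems by blast
  then obtain u f1 f2 where u: "u \<in> unitgrp" "f1 \<in> \<Lambda>" "f2 \<in> \<Lambda>" "ileq f1 f2"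
    "conjugate u f1 = g" "conjugate u f2 = e"
    using ileq_conjugate_Lambda[OF assms(2) _ assms(3)] by blast
  have "f2 = e" using Lambda_conjugate_eq[OF u(3) assms(1) u(1) one_in_unitgrp] u(6) by simp
  then show ?thesis using u Wc_iff_conjugate by blast
qed

lemma ileq_Lambda_conjugate_above:
  assumes "p \<in> \<Lambda>" "x \<in> idems" "ileq p x"
  shows "\<exists>k\<in>Wstar p. \<exists>g\<in>\<Lambda>. ileq p g \<and> conjugate k g = x"
proof -
  have "p \<in> idems" using assms(1) Lambda_subset_idems by blast
  then obtain u f1 g where u: "u \<in> unitgrp" "f1 \<in> \<Lambda>" "g \<in> \<Lambda>" "ileq f1 g"
    "conjugate u f1 = p" "conjugate u g = x"
    using ileq_conjugate_Lambda[OF _ assms(2,3)] by blast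
  have "f1 = p" using Lambda_conjugate_eq[OF u(2) assms(1) u(1) one_in_unitgrp] u(5) by simp
  then have "u \<in> Wc p" "ileq p g" using u Wc_iff_conjugate by auto
  then obtain k b where k: "k \<in> Wstar p" "b \<in> Wc g" "u = k * b"
    using Wc_factor_Wstar_Wc[OF assms(1) u(3)] by blast
  have "k \<in> unitgrp" "b \<in> unitgrp" using k unfolding Wstar_def Wc_def by auto
  then have "conjugate k g = conjugate u g"
    using k conjugate_conjugate Wc_iff_conjugate by metis
  then show ?thesis using k(1) u(3,6) \<open>ileq p g\<close> by auto
qed

lemma chain_conjugate_Lambda:
  fixes e :: "nat \<Rightarrow> 'a"
  assumes "\<forall>i<m. e i \<in> idems" "\<forall>i. Suc i < m \<longrightarrow> ileq (e i) (e (Suc i))"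
  shows "\<exists>w\<in>unitgrp. \<exists>f. (\<forall>i<m. f i \<in> \<Lambda>) \<and> (\<forall>i. Suc i < m \<longrightarrow> ileq (f i) (f (Suc i)))
           \<and> (\<forall>i<m. conjugate w (f i) = e i)"
  using assms
proof (induction m)
  case 0
  show ?case by (intro bexI[OF _ one_in_unitgrp] exI) simp
next
  case (Suc m)
  show ?case
  proof (cases m)
    case 0
    then have "e 0 \<in> idems" using Suc.prems(1) by simp
    then obtain f0 w where "f0 \<in> \<Lambda>" "w \<in> unitgrp" "conjugate w f0 = e 0"
      using ex1_implies_ex[OF Lambda_orbit_representative] by blast
    then show ?thesis using 0 by (intro bexI[of _ w] exI[of _ "\<lambda>_. f0"]) auto
  next
    case (Suc m')
    obtain w f where w: "w \<in> unitgrp" and f: "\<forall>i<m. f i \<in> \<Lambda>"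
      "\<forall>i. Suc i < m \<longrightarrow> ileq (f i) (f (Suc i))" "\<forall>i<m. conjugate w (f i) = e i"
      using Suc.IH Suc.prems by fastforce
    let ?p = "f m'" and ?x = "conjugate (uinv w) (e m)"
    have p: "?p \<in> \<Lambda>" "?p \<in> idems" "conjugate w ?p = e m'"
      using f Suc Lambda_subset_idems by auto
    have "?x \<in> idems" using conjugate_idems[OF uinv_in_unitgrp[OF w]] Suc.prems(1) by simp
    moreover have "ileq ?p ?x"
    proof -
      have "ileq (e m') (e m)" using Suc.prems(2) Suc by simp
      then have "ileq (conjugate (uinv w) (e m')) ?x"
        using conjugate_ileq[OF uinv_in_unitgrp[OF w]] by blast
      then show ?thesis using p(3) conjugate_uinv_cancel(1)[OF w] by metis
    qed
    ultimately obtain k g where k: "k \<in> Wstar ?p" "g \<in> \<Lambda>" "ileq ?p g" "conjugate k g = ?x"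
      using ileq_Lambda_conjugate_above[OF p(1)] by blast
    have kU: "k \<in> unitgrp" using k(1) unfolding Wstar_def by simp
    txt \<open>The new conjugator \<open>w k\<close> still works on the old chain, all of which lies below \<open>f m'\<close>.\<close>
    have "conjugate (w * k) (f i) = e i" if "i < m" for i
    proof -
      have "ileq (f i) ?p" using chain_ileq[OF f(2)] f(1) that Suc Lambda_subset_idems by auto
      then have "conjugate k (f i) = f i" using Wstar_conjugate_below[OF k(1)] by simp
      then show ?thesis using conjugate_conjugate[OF w kU] f(3) that by metis
    qed
    moreover have "conjugate (w * k) g = e m"
      using conjugate_conjugate[OF w kU] k(4) conjugate_uinv_cancel(2)[OF w] by metis
    ultimately show ?thesis
      using mult_in_unitgrp[OF w kU] f k(2,3) Suc
      by (intro bexI[of _ "w * k"] exI[of _ "f(m := g)"]) (auto simp: less_Suc_eq)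
  qed
qed

lemma lam_least:
  assumes e: "e \<in> \<Lambda>" and least: "\<forall>f\<in>\<Lambda>. ileq e f"
  shows "lam S e = S"
proof -
  have eI: "e \<in> idems" using e Lambda_subset_idems by blast
  have "s \<in> Wc e" if sS: "s \<in> S" for s
  proof -
    have sU: "s \<in> unitgrp" using generators_in_unitgrp sS by blast
    let ?x = "conjugate s e"
    have xI: "?x \<in> idems" using conjugate_idems[OF sU eI] .
    obtain u f where u: "u \<in> Wc e" "f \<in> \<Lambda>" "ileq f e" "conjugate u f = e * ?x"
      using ileq_Lambda_conjugate_below[OF e idems_mult(1,2)[OF eI xI]] by blast
    have "f = e" using ileq_antisym u(2,3) least by blast
    moreover have "u \<in> unitgrp" using u(1) unfolding Wc_def by simp
    ultimately have "e * ?x = e" using u(1,4) Wc_iff_conjugate by metis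
    then have "ileq e ?x" using idems_mult(3)[OF eI xI] by simp
    then have "e = ?x" using conjugate_ileq_eq[OF eI xI _ sU] by simp
    then show "s \<in> Wc e" using Wc_iff_conjugate[OF sU] by simp
  qed
  then have "S \<subseteq> S \<inter> parab (lam S e)" using Wc_eq_parab_lam[OF e] by blast
  then show ?thesis using parab_inter_generators[OF coxeter lam_subset[OF e]] by blast
qed

lemma Red_in_Wstar:
  assumes "e \<in> \<Lambda>" "f \<in> \<Lambda>" "h \<in> \<Lambda>" "w \<in> Red S e f"
    and "a \<in> Wc e" "k \<in> Wstar h" "b \<in> Wc f" "w = a * k * b"
  shows "w \<in> Wstar h"
proof -
  obtain J where J: "J \<subseteq> S" "Wstar h = parab J" using Wstar_parab[OF assms(3)] by blast
  have "w \<in> parab J"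
    using min_double_coset_rep_in_parab[OF coxeter lam_subset[OF assms(1)] lam_subset[OF assms(2)] J(1)]
      assms(4-8) J(2) Wc_eq_parab_lam[OF assms(1)] Wc_eq_parab_lam[OF assms(2)]
    unfolding Red_def by blast
  then show ?thesis using J(2) by simp
qed

text \<open>The idempotent \<open>e (w f w\<^sup>-\<^sup>1)\<close> is conjugate, by some \<open>u \<in> W(e)\<close>, to an
  \<open>f\<^sub>1 \<in> \<Lambda>\<close> below \<open>e\<close>; conjugating back by \<open>w\<^sup>-\<^sup>1\<close> and applying the same argument at
  \<open>f\<close> shows \<open>f\<^sub>1 \<le> f\<close> and yields \<open>v \<in> W(f)\<close> with \<open>u\<^sup>-\<^sup>1 w v \<in> W(f\<^sub>1)\<close>.\<close>

lemma meet_conjugate_Lambda: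
  assumes e: "e \<in> \<Lambda>" and f: "f \<in> \<Lambda>" and wU: "w \<in> unitgrp"
  obtains u v f1 where "u \<in> Wc e" "v \<in> Wc f" "f1 \<in> \<Lambda>" "ileq f1 e" "ileq f1 f"
    "conjugate u f1 = e * conjugate w f" "uinv u * w * v \<in> Wc f1"
proof -
  have eI: "e \<in> idems" and fI: "f \<in> idems" using e f Lambda_subset_idems by auto
  let ?x = "conjugate w f"
  have xI: "?x \<in> idems" using conjugate_idems[OF wU fI] .
  obtain u f1 where u: "u \<in> Wc e" "f1 \<in> \<Lambda>" "ileq f1 e" "conjugate u f1 = e * ?x"
    using ileq_Lambda_conjugate_below[OF e idems_mult(1,2)[OF eI xI]] by blast
  have uU: "u \<in> unitgrp" using u(1) unfolding Wc_def by simp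
  have "conjugate (uinv w) (e * ?x) = conjugate (uinv w) e * f"
    using conjugate_mult[OF uinv_in_unitgrp[OF wU]] conjugate_uinv_cancel(1)[OF wU] by simp
  moreover have "conjugate (uinv w) e \<in> idems" using conjugate_idems[OF uinv_in_unitgrp[OF wU] eI] .
  ultimately obtain v f1' where v: "v \<in> Wc f" "f1' \<in> \<Lambda>" "ileq f1' f"
      "conjugate v f1' = conjugate (uinv w) (e * ?x)"
    using ileq_Lambda_conjugate_below[OF f] idems_mult(1,3)[OF _ fI] by metis
  have vU: "v \<in> unitgrp" using v(1) unfolding Wc_def by simp
  have "conjugate (w * v) f1' = e * ?x"
    using v(4) conjugate_conjugate[OF wU vU] conjugate_uinv_cancel(2)[OF wU] by metis
  then have "f1' = f1"
    using Lambda_conjugate_eq[OF v(2) u(2) mult_in_unitgrp[OF wU vU] uU] u(4) by simp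
  let ?y = "uinv u * w * v"
  have yU: "?y \<in> unitgrp" using mult_in_unitgrp uinv_in_unitgrp uU wU vU by metis
  have "conjugate ?y f1 = conjugate (uinv u) (conjugate w (conjugate v f1))"
    using conjugate_conjugate uinv_in_unitgrp uU wU vU mult_in_unitgrp by metis
  also have "\<dots> = f1"
    using v(4) \<open>f1' = f1\<close> u(4) conjugate_uinv_cancel[OF wU] conjugate_uinv_cancel[OF uU] by metis
  finally have "?y \<in> Wc f1" using Wc_iff_conjugate[OF yU] by simp
  then show thesis using that u v(1,3) \<open>f1' = f1\<close> by blast
qed

text \<open>Minimality of \<open>w \<in> Red(e,f)\<close> places it in \<open>W\<^sub>\<star>(f\<^sub>1)\<close>.\<close>

lemma Red_Wstar_representative:
  assumes e: "e \<in> \<Lambda>" and f: "f \<in> \<Lambda>" and w: "w \<in> Red S e f"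
  obtains f1 u where "f1 \<in> \<Lambda>" "ileq f1 e" "ileq f1 f" "w \<in> Wstar f1" "u \<in> unitgrp"
    "conjugate u f1 = e * conjugate w f"
proof -
  have wU: "w \<in> unitgrp" using w unfolding Red_def by simp
  obtain u v f1 where u: "u \<in> Wc e" "v \<in> Wc f" "f1 \<in> \<Lambda>" "ileq f1 e" "ileq f1 f"
    "conjugate u f1 = e * conjugate w f" "uinv u * w * v \<in> Wc f1"
    using meet_conjugate_Lambda[OF e f wU] .
  have uU: "u \<in> unitgrp" and vU: "v \<in> unitgrp" using u(1,2) unfolding Wc_def by auto
  obtain k b where k: "k \<in> Wstar f1" "b \<in> Wc f" "uinv u * w * v = k * b"
    using Wc_factor_Wstar_Wc[OF u(3) f u(5,7)] by blast
  have "u * (uinv u * w * v) * uinv v = w"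
    using unitgrp_uinv[OF uU] unitgrp_uinv[OF vU] by (simp add: mult.assoc) (simp flip: mult.assoc)
  moreover have "u * (uinv u * w * v) * uinv v = u * k * (b * uinv v)"
    using k(3) by (simp add: mult.assoc)
  ultimately have "w = u * k * (b * uinv v)" by simp
  moreover have "b * uinv v \<in> Wc f" using Wc_subgroup k(2) u(2) by blast
  ultimately have "w \<in> Wstar f1" using Red_in_Wstar[OF e f u(3) w u(1) k(1)] by blast
  then show thesis using that u(3-6) uU by blast
qed

lemma Red_product:
  assumes e: "e \<in> \<Lambda>" and f: "f \<in> \<Lambda>" and w: "w \<in> Red S e f"
  shows "e * w * f \<in> \<Lambda>" "ileq (e * w * f) e" "ileq (e * w * f) f" "w \<in> Wc (e * w * f)"
    "e * w * f = f * uinv w * e"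
proof -
  obtain f1 u where f1: "f1 \<in> \<Lambda>" "ileq f1 e" "ileq f1 f" "w \<in> Wstar f1" "u \<in> unitgrp"
    and g: "conjugate u f1 = e * conjugate w f"
    using Red_Wstar_representative[OF assms] .
  have wU: "w \<in> unitgrp" using w unfolding Red_def by simp
  let ?x = "conjugate w f"
  have xI: "?x \<in> idems" using conjugate_idems wU f Lambda_subset_idems by blast
  have eI: "e \<in> idems" and f1I: "f1 \<in> idems" using e f1(1) Lambda_subset_idems by auto
  have f1e: "f1 * e = f1" and f1f: "f1 * f = f1" using f1(2,3) unfolding ileq_def by auto
  have wf1: "w * f1 = f1" "f1 * w = f1" using f1(4) unfolding Wstar_def by auto
  have f1w': "f1 * uinv w = f1"
    using wf1(2) unitgrp_uinv(1)[OF wU] by (metis mult.assoc mult_1_right)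
  have w'f1: "uinv w * f1 = f1"
    using wf1(1) unitgrp_uinv(2)[OF wU] by (metis mult.assoc mult_1_left)
  have "f1 * (e * ?x) = f1"
    unfolding conjugate_def using f1e wf1(2) f1f f1w' by (simp flip: mult.assoc)
  then have "ileq f1 (e * ?x)"
    using idems_commute[OF f1I idems_mult(1)[OF eI xI]] unfolding ileq_def by simp
  then have ex: "e * ?x = f1"
    using conjugate_ileq_eq[OF f1I idems_mult(1)[OF eI xI] _ f1(5)] g by simp
  have ewf: "e * w * f = f1"
  proof -
    have "e * w * f = e * ?x * w"
      unfolding conjugate_def using unitgrp_uinv(2)[OF wU] by (simp add: mult.assoc)
    then show ?thesis using ex wf1(2) by simp
  qed
  have "f * uinv w * e = uinv w * (?x * e)"
    unfolding conjugate_def using unitgrp_uinv(2)[OF wU] by (simp flip: mult.assoc)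
  also have "\<dots> = f1" using ex idems_commute[OF xI eI] w'f1 by simp
  finally show "e * w * f = f * uinv w * e" using ewf by simp
  show "e * w * f \<in> \<Lambda>" "ileq (e * w * f) e" "ileq (e * w * f) f" using ewf f1 by simp_all
  show "w \<in> Wc (e * w * f)" using ewf f1(4) Wstar_subset_Wc by blast
qed

lemma Red_product_greatest:
  assumes e: "e \<in> \<Lambda>" and f: "f \<in> \<Lambda>" and w: "w \<in> Red S e f"
    and h: "h \<in> \<Lambda>" "ileq h e" "ileq h f" "w \<in> Wc h"
  shows "ileq h (e * w * f)"
proof -
  obtain k b where "k \<in> Wstar h" "b \<in> Wc f" "w = k * b"
    using Wc_factor_Wstar_Wc[OF h(1) f h(3,4)] by blast
  then have "w \<in> Wstar h" using Red_in_Wstar[OF e f h(1) w Wc_subgroup(1)] by simp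
  then have "h * w = h" "w * h = h" unfolding Wstar_def by auto
  then show ?thesis using h(2,3) unfolding ileq_def by (metis mult.assoc)
qed

end

theorem mainTheorem11:
  fixes \<Lambda> S :: "'a::monoid_mult set"
  assumes "gen_RC_system \<Lambda> S"
  shows "(\<forall>(m::nat) (e::nat \<Rightarrow> 'a).
            (\<forall>i<m. e i \<in> idems) \<and> (\<forall>i. Suc i < m \<longrightarrow> ileq (e i) (e (Suc i))) \<longrightarrow>
            (\<exists>w\<in>unitgrp. \<exists>f::nat \<Rightarrow> 'a. (\<forall>i<m. f i \<in> \<Lambda>) \<and>
               (\<forall>i. Suc i < m \<longrightarrow> ileq (f i) (f (Suc i))) \<and>
               (\<forall>i<m. w * f i * uinv w = e i)))
       \<and> (\<forall>e\<in>\<Lambda>. (\<forall>f\<in>\<Lambda>. ileq e f) \<longrightarrow> lam S e = S)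
       \<and> (\<forall>e\<in>\<Lambda>. \<forall>f\<in>\<Lambda>. \<forall>w\<in>Red S e f.
            is_max_ileq {h \<in> \<Lambda>. ileq h e \<and> ileq h f \<and> w \<in> Wc h} (e * w * f) \<and>
            e * w * f = f * uinv w * e)"
proof -
  interpret gen_RC \<Lambda> S using assms by unfold_locales
  show ?thesis
  proof (intro conjI allI impI ballI)
    fix m and e :: "nat \<Rightarrow> 'a"
    assume "(\<forall>i<m. e i \<in> idems) \<and> (\<forall>i. Suc i < m \<longrightarrow> ileq (e i) (e (Suc i)))"
    then show "\<exists>w\<in>unitgrp. \<exists>f. (\<forall>i<m. f i \<in> \<Lambda>) \<and> (\<forall>i. Suc i < m \<longrightarrow> ileq (f i) (f (Suc i)))
                 \<and> (\<forall>i<m. w * f i * uinv w = e i)"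
      using chain_conjugate_Lambda unfolding conjugate_def by blast
  next
    fix e assume "e \<in> \<Lambda>" "\<forall>f\<in>\<Lambda>. ileq e f"
    then show "lam S e = S" by (rule lam_least)
  next
    fix e f w assume "e \<in> \<Lambda>" "f \<in> \<Lambda>" "w \<in> Red S e f"
    then show "is_max_ileq {h \<in> \<Lambda>. ileq h e \<and> ileq h f \<and> w \<in> Wc h} (e * w * f)"
      "e * w * f = f * uinv w * e"
      unfolding is_max_ileq_def using Red_product Red_product_greatest by auto
  qed
qed

end
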